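(* Let $P=(X,\leq)$ be a partially ordered set whose incomparability graph is locally finite. Then there exist a partition of $X$ into antichains and a chain $C\subseteq X$ of $P$ such that $C$ intersects every member of the partition.
   Context: The incomparability graph of a poset $P=(X,\leq)$ is the graph with vertex set $X$ whose edges are the pairs $\{u,v\}$ of distinct elements that are incomparable in $P$ (neither $u\leq v$ nor $v\leq u$). A graph is locally finite if every vertex is adjacent to finitely many vertices. An antichain is a set of pairwise incomparable elements; a chain is a set of pairwise comparable elements. *)

theory Defs
  imports Main "HOL-Library.Disjoint_Sets"
begin

text \<open>A poset is a carrier X with a relation r satisfying partial_order_on X r;
  only pairs inside X matter.\<close>

definition incomparable :: "'a rel \<Rightarrow> 'a \<Rightarrow> 'a \<Rightarrow> bool" where
  "incomparable r x y \<longleftrightarrow> (x, y) \<notin> r \<and> (y, x) \<notin> r"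

definition incomp_nbhd :: "'a set \<Rightarrow> 'a rel \<Rightarrow> 'a \<Rightarrow> 'a set" where
  "incomp_nbhd X r x = {y \<in> X. y \<noteq> x \<and> incomparable r x y}"

definition incomp_graph_locally_finite :: "'a set \<Rightarrow> 'a rel \<Rightarrow> bool" where
  "incomp_graph_locally_finite X r \<longleftrightarrow> (\<forall>x\<in>X. finite (incomp_nbhd X r x))"

definition antichain_in :: "'a set \<Rightarrow> 'a rel \<Rightarrow> 'a set \<Rightarrow> bool" where
  "antichain_in X r A \<longleftrightarrow> A \<subseteq> X \<and> (\<forall>x\<in>A. \<forall>y\<in>A. x \<noteq> y \<longrightarrow> incomparable r x y)"

definition chain_in :: "'a set \<Rightarrow> 'a rel \<Rightarrow> 'a set \<Rightarrow> bool" where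
  "chain_in X r C \<longleftrightarrow> C \<subseteq> X \<and> (\<forall>x\<in>C. \<forall>y\<in>C. (x, y) \<in> r \<or> (y, x) \<in> r)"

end

theory Submission
  imports Defs "HOL-Analysis.Function_Topology"
begin

text \<open>A partition into antichains together with a chain meeting every block is the same as a
  map f that is idempotent, whose fixed points form a chain and whose fibres are antichains:
  f sends each element to the chain element of its block. For finite posets such a map is built
  by induction, removing the antichain M of minimal elements: M becomes a new block, and its
  representative is an element of M below the least chain element of the rest. Since x and f x lie
  in a common antichain, f x is x or an incomparability neighbour of x, so under local finiteness
  f ranges over a product of finite sets; Tychonoff's theorem turns the solutions on all finite
  subsets into one on the whole poset.\<close>

definition chain_retraction :: "'a rel \<Rightarrow> 'a set \<Rightarrow> ('a \<Rightarrow> 'a) \<Rightarrow> bool" where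
  "chain_retraction r F f \<longleftrightarrow>
     (\<forall>x\<in>F. f (f x) = f x) \<and>
     (\<forall>x\<in>F. \<forall>y\<in>F. f x = x \<longrightarrow> f y = y \<longrightarrow> (x, y) \<in> r \<or> (y, x) \<in> r) \<and>
     (\<forall>x\<in>F. \<forall>y\<in>F. x \<noteq> y \<longrightarrow> f x = f y \<longrightarrow> incomparable r x y)"

lemma chain_retraction_subset:
  "chain_retraction r G f \<Longrightarrow> F \<subseteq> G \<Longrightarrow> chain_retraction r F f"
  unfolding chain_retraction_def by blast

lemma chain_retraction_cong:
  assumes "chain_retraction r F f" and "\<forall>x \<in> F \<union> f ` F. g x = f x"
  shows "chain_retraction r F g"
  using assms unfolding chain_retraction_def by auto

lemma chain_retraction_finite_character:
  assumes "\<And>F. finite F \<Longrightarrow> F \<subseteq> X \<Longrightarrow> chain_retraction r F f"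
  shows "chain_retraction r X f"
proof -
  have "chain_retraction r {x, y} f" if "x \<in> X" "y \<in> X" for x y
    using assms that by simp
  then show ?thesis
    unfolding chain_retraction_def by (metis insertCI)
qed

lemma chain_retraction_incomparable:
  assumes "chain_retraction r F f" "x \<in> F" "f x \<in> F" "f x \<noteq> x"
  shows "incomparable r x (f x)"
  using assms unfolding chain_retraction_def by metis

lemma chain_retraction_Un_antichain:
  assumes f: "chain_retraction r B f" "f ` B \<subseteq> B"
    and A: "\<forall>x\<in>A. \<forall>y\<in>A. x \<noteq> y \<longrightarrow> incomparable r x y" "A \<inter> B = {}"
    and m: "m \<in> A" "(m, m) \<in> r" "\<forall>c\<in>B. f c = c \<longrightarrow> (m, c) \<in> r"
  defines "g \<equiv> \<lambda>x. if x \<in> A then m else f x"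
  shows "chain_retraction r (A \<union> B) g" "g ` (A \<union> B) \<subseteq> A \<union> B"
proof -
  have gB: "g x = f x" "f x \<notin> A" if "x \<in> B" for x
    using that f(2) A(2) unfolding g_def by auto
  have "g (g x) = g x" if "x \<in> A \<union> B" for x
    using that f(1) gB m(1) unfolding chain_retraction_def g_def by auto
  moreover have "(x, y) \<in> r \<or> (y, x) \<in> r"
    if "x \<in> A \<union> B" "y \<in> A \<union> B" "g x = x" "g y = y" for x y
    using that f(1) gB m A(2) unfolding chain_retraction_def g_def
    by (smt (verit) Un_iff disjoint_iff)
  moreover have "incomparable r x y"
    if "x \<in> A \<union> B" "y \<in> A \<union> B" "x \<noteq> y" "g x = g y" for x y
    using that f(1) gB m(1) A unfolding chain_retraction_def g_def
    by (smt (verit) Un_iff)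
  ultimately show "chain_retraction r (A \<union> B) g"
    unfolding chain_retraction_def by blast
  show "g ` (A \<union> B) \<subseteq> A \<union> B"
    using gB f(2) m(1) unfolding g_def by auto
qed

lemma finite_partial_order_minimal_below:
  assumes po: "partial_order_on X r" and Y: "finite Y" "Y \<subseteq> X" "y \<in> Y"
  shows "\<exists>m\<in>Y. (m, y) \<in> r \<and> (\<forall>z\<in>Y. (z, m) \<in> r \<longrightarrow> z = m)"
proof -
  have refl: "(y, y) \<in> r" and tr: "trans r" and an: "antisym r"
    using partial_order_onD[OF po] Y by (auto simp: refl_on_def)
  define less where "less a b \<longleftrightarrow> (a, b) \<in> r \<and> a \<noteq> b" for a b
  have "asymp_on Y less" "transp_on Y less"
    using tr an unfolding less_def asymp_on_def transp_on_def
    by (auto dest: antisymD transD)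
  then obtain m where m: "m \<in> Y" "(m, y) \<in> r" "\<forall>z\<in>Y. less z m \<longrightarrow> (z, y) \<notin> r"
    using Finite_Set.bex_min_element_with_property[of Y less "\<lambda>z. (z, y) \<in> r"] Y refl
    by blast
  have "z = m" if "z \<in> Y" "(z, m) \<in> r" for z
    using m that tr unfolding less_def by (meson transD)
  with m show ?thesis by blast
qed

lemma finite_chain_has_least:
  assumes po: "partial_order_on X r"
    and C: "finite C" "C \<subseteq> X" "C \<noteq> {}" "\<forall>x\<in>C. \<forall>y\<in>C. (x, y) \<in> r \<or> (y, x) \<in> r"
  shows "\<exists>c\<in>C. \<forall>z\<in>C. (c, z) \<in> r"
proof -
  obtain y where "y \<in> C" using C(3) by blast
  then obtain c where c: "c \<in> C" "\<forall>z\<in>C. (z, c) \<in> r \<longrightarrow> z = c"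
    using finite_partial_order_minimal_below[OF po C(1,2)] by blast
  have "(c, z) \<in> r" if "z \<in> C" for z
    using that c C(4) by blast
  with c(1) show ?thesis by blast
qed

lemma finite_chain_retraction_exists:
  assumes po: "partial_order_on X r" and "finite Y" "Y \<subseteq> X"
  shows "\<exists>f. chain_retraction r Y f \<and> f ` Y \<subseteq> Y"
  using assms(2,3)
proof (induction Y rule: finite_psubset_induct)
  case (psubset Y)
  show ?case
  proof (cases "Y = {}")
    case True
    then show ?thesis unfolding chain_retraction_def by auto
  next
    case False
    define M where "M = {m\<in>Y. \<forall>z\<in>Y. (z, m) \<in> r \<longrightarrow> z = m}"
    have M_antichain: "\<forall>x\<in>M. \<forall>y\<in>M. x \<noteq> y \<longrightarrow> incomparable r x y"
      unfolding M_def incomparable_def by blast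
    have M_below: "\<exists>m\<in>M. (m, y) \<in> r" if "y \<in> Y" for y
      using finite_partial_order_minimal_below[OF po psubset.hyps(1) psubset.prems that]
      unfolding M_def by blast
    have "M \<noteq> {}" using False M_below by blast
    have MY: "M \<subseteq> Y" unfolding M_def by blast
    then have "Y - M \<subset> Y" using \<open>M \<noteq> {}\<close> by blast
    moreover have "Y - M \<subseteq> X" using psubset.prems by blast
    ultimately have "\<exists>f. chain_retraction r (Y - M) f \<and> f ` (Y - M) \<subseteq> Y - M"
      by (rule psubset.IH)
    then obtain f where f: "chain_retraction r (Y - M) f" "f ` (Y - M) \<subseteq> Y - M"
      by auto
    define C where "C = {c \<in> Y - M. f c = c}"
    have "\<exists>m\<in>M. \<forall>c\<in>C. (m, c) \<in> r"
    proof (cases "C = {}")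
      case False
      moreover have "finite C" "C \<subseteq> X" "\<forall>x\<in>C. \<forall>y\<in>C. (x, y) \<in> r \<or> (y, x) \<in> r"
        using psubset.hyps(1) psubset.prems f(1) unfolding C_def chain_retraction_def by auto
      ultimately obtain c where c: "c \<in> C" "\<forall>z\<in>C. (c, z) \<in> r"
        using finite_chain_has_least[OF po] by blast
      moreover obtain m where "m \<in> M" "(m, c) \<in> r"
        using M_below c(1) unfolding C_def by blast
      ultimately show ?thesis
        using partial_order_onD(2)[OF po] by (meson transD)
    qed (use \<open>M \<noteq> {}\<close> in blast)
    then obtain m where m: "m \<in> M" "\<forall>c\<in>Y - M. f c = c \<longrightarrow> (m, c) \<in> r"
      unfolding C_def by blast
    have "(m, m) \<in> r"
      using m(1) MY psubset.prems partial_order_onD(1)[OF po] unfolding refl_on_def by blast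
    moreover have "M \<inter> (Y - M) = {}" "M \<union> (Y - M) = Y"
      using MY by auto
    ultimately show ?thesis
      using chain_retraction_Un_antichain[OF f M_antichain _ m(1) _ m(2)] by metis
  qed
qed

lemma closedin_product_discrete_finitely_determined:
  assumes "finite G" "G \<subseteq> I"
    and determined: "\<And>f g. f \<in> PiE I S \<Longrightarrow> g \<in> PiE I S \<Longrightarrow> (\<forall>i\<in>G. f i = g i) \<Longrightarrow> P f \<Longrightarrow> P g"
  shows "closedin (product_topology (\<lambda>i. discrete_topology (S i)) I) {f \<in> PiE I S. P f}"
proof -
  let ?T = "product_topology (\<lambda>i. discrete_topology (S i)) I"
  have "openin ?T {f \<in> PiE I S. \<not> P f}"
  proof (subst openin_subopen, intro ballI)
    fix f assume f: "f \<in> {f \<in> PiE I S. \<not> P f}"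
    let ?N = "(\<Inter>i\<in>G. {g \<in> topspace ?T. g i \<in> {f i}}) \<inter> topspace ?T"
    have "openin ?T ?N"
    proof (rule openin_INT[OF assms(1)])
      fix i assume "i \<in> G"
      with assms(2) have "i \<in> I" by auto
      then show "openin ?T {g \<in> topspace ?T. g i \<in> {f i}}"
        using openin_continuous_map_preimage[OF continuous_map_product_projection[OF \<open>i \<in> I\<close>,
              of "\<lambda>i. discrete_topology (S i)"], of "{f i}"] f
        by auto
    qed
    moreover have "?N \<subseteq> {f \<in> PiE I S. \<not> P f}"
      using determined[of _ f] f by auto
    moreover have "f \<in> ?N" using f by auto
    ultimately show "\<exists>T. openin ?T T \<and> f \<in> T \<and> T \<subseteq> {f \<in> PiE I S. \<not> P f}" by blast
  qed
  moreover have "topspace ?T - {f \<in> PiE I S. P f} = {f \<in> PiE I S. \<not> P f}" by auto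
  ultimately show ?thesis unfolding closedin_def by auto
qed

lemma finite_satisfiability_PiE:
  assumes finite: "\<And>i. i \<in> I \<Longrightarrow> finite (S i)"
    and determined: "\<And>F. finite F \<Longrightarrow> F \<subseteq> I \<Longrightarrow> \<exists>G. finite G \<and> G \<subseteq> I \<and>
           (\<forall>f\<in>PiE I S. \<forall>g\<in>PiE I S. (\<forall>i\<in>G. f i = g i) \<longrightarrow> Q F f \<longrightarrow> Q F g)"
    and mono: "\<And>F G f. Q G f \<Longrightarrow> F \<subseteq> G \<Longrightarrow> Q F f"
    and satisfiable: "\<And>F. finite F \<Longrightarrow> F \<subseteq> I \<Longrightarrow> \<exists>f\<in>PiE I S. Q F f"
  shows "\<exists>f\<in>PiE I S. \<forall>F. finite F \<and> F \<subseteq> I \<longrightarrow> Q F f"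
proof -
  let ?T = "product_topology (\<lambda>i. discrete_topology (S i)) I"
  define sols where "sols F = {f \<in> PiE I S. Q F f}" for F
  define U where "U = sols ` {F. finite F \<and> F \<subseteq> I}"
  have compact: "compact_space ?T"
    using finite by (simp add: compact_space_product_topology compact_space_discrete_topology)
  have "closedin ?T (sols F)" if F: "finite F" "F \<subseteq> I" for F
  proof -
    obtain G where "finite G" "G \<subseteq> I"
      "\<forall>f\<in>PiE I S. \<forall>g\<in>PiE I S. (\<forall>i\<in>G. f i = g i) \<longrightarrow> Q F f \<longrightarrow> Q F g"
      using determined[OF F] by blast
    then show ?thesis
      unfolding sols_def by (intro closedin_product_discrete_finitely_determined) auto
  qed
  then have closed: "\<forall>C\<in>U. closedin ?T C" unfolding U_def by blast
  have fip: "\<Inter>\<F> \<noteq> {}" if \<F>: "finite \<F>" "\<F> \<subseteq> U" for \<F>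
  proof -
    obtain \<G> where \<G>: "\<G> \<subseteq> {F. finite F \<and> F \<subseteq> I}" "finite \<G>" "\<F> = sols ` \<G>"
      using finite_subset_image[OF \<F>[unfolded U_def]] by blast
    have "finite (\<Union>\<G>)" "\<Union>\<G> \<subseteq> I" using \<G>(1,2) by auto
    then obtain f where "f \<in> PiE I S" "Q (\<Union>\<G>) f"
      using satisfiable by blast
    then have "f \<in> \<Inter>\<F>"
      using mono[of "\<Union>\<G>" f] \<G>(3) unfolding sols_def by blast
    then show ?thesis by blast
  qed
  have "\<Inter>U \<noteq> {}"
    using compact[unfolded compact_space_fip, rule_format, of U] closed fip by blast
  then obtain f where "f \<in> \<Inter>U" by blast
  moreover have "sols {} \<in> U" unfolding U_def by blast
  ultimately show ?thesis unfolding U_def sols_def by blast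
qed

lemma finite_chain_retraction_PiE_nbhd:
  assumes po: "partial_order_on X r" and Y: "finite Y" "Y \<subseteq> X"
  shows "\<exists>g\<in>PiE X (\<lambda>x. insert x (incomp_nbhd X r x)). chain_retraction r Y g"
proof -
  obtain f where f: "chain_retraction r Y f" "f ` Y \<subseteq> Y"
    using finite_chain_retraction_exists[OF po Y] by blast
  define g where "g = restrict (\<lambda>x. if x \<in> Y then f x else x) X"
  have "g x \<in> insert x (incomp_nbhd X r x)" if "x \<in> X" for x
  proof (cases "x \<in> Y \<and> f x \<noteq> x")
    case True
    moreover have "f x \<in> Y" using True f(2) by blast
    ultimately have "incomparable r x (f x)"
      using chain_retraction_incomparable[OF f(1)] by blast
    then show ?thesis
      using True \<open>f x \<in> Y\<close> Y(2) that unfolding g_def incomp_nbhd_def by auto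
  qed (use that in \<open>auto simp: g_def\<close>)
  then have "g \<in> PiE X (\<lambda>x. insert x (incomp_nbhd X r x))" unfolding g_def by auto
  moreover have "g x = f x" if "x \<in> Y" for x
    using that Y(2) unfolding g_def by (simp add: subset_iff)
  then have "\<forall>x \<in> Y \<union> f ` Y. g x = f x"
    using f(2) by blast
  then have "chain_retraction r Y g"
    by (rule chain_retraction_cong[OF f(1)])
  ultimately show ?thesis by blast
qed

lemma locally_finite_chain_retraction_exists:
  assumes po: "partial_order_on X r" and lf: "incomp_graph_locally_finite X r"
  shows "\<exists>f. chain_retraction r X f \<and> f ` X \<subseteq> X"
proof -
  define S where "S x = insert x (incomp_nbhd X r x)" for x
  have S_finite: "finite (S x)" if "x \<in> X" for x
    using lf that unfolding S_def incomp_graph_locally_finite_def by auto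
  have S_subset: "S x \<subseteq> X" if "x \<in> X" for x
    using that unfolding S_def incomp_nbhd_def by auto
  have "\<exists>f\<in>PiE X S. \<forall>F. finite F \<and> F \<subseteq> X \<longrightarrow> chain_retraction r F f"
  proof (rule finite_satisfiability_PiE)
    fix F assume F: "finite F" "F \<subseteq> X"
    let ?G = "\<Union> (S ` F)"
    have G: "finite ?G" "?G \<subseteq> X" "F \<subseteq> ?G"
      using F S_finite S_subset unfolding S_def by auto
    show "\<exists>G. finite G \<and> G \<subseteq> X \<and> (\<forall>f\<in>PiE X S. \<forall>g\<in>PiE X S.
            (\<forall>i\<in>G. f i = g i) \<longrightarrow> chain_retraction r F f \<longrightarrow> chain_retraction r F g)"
    proof (intro exI[of _ ?G] conjI G(1,2) ballI impI)
      fix f g assume fg: "f \<in> PiE X S" "\<forall>i\<in>?G. f i = g i"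
        and f: "chain_retraction r F f"
      have "f ` F \<subseteq> ?G" using fg(1) F(2) by fastforce
      then have "\<forall>x \<in> F \<union> f ` F. g x = f x" using fg(2) G(3) by auto
      with f show "chain_retraction r F g" by (rule chain_retraction_cong)
    qed
    show "\<exists>f\<in>PiE X S. chain_retraction r F f"
      using finite_chain_retraction_PiE_nbhd[OF po G(1,2)] chain_retraction_subset[OF _ G(3)]
      unfolding S_def by blast
  qed (fact S_finite chain_retraction_subset)+
  then obtain f where "f \<in> PiE X S" "\<And>F. finite F \<Longrightarrow> F \<subseteq> X \<Longrightarrow> chain_retraction r F f"
    by blast
  then show ?thesis
    using S_subset chain_retraction_finite_character[of X r f] by (fastforce simp: PiE_iff)
qed

lemma chain_retraction_antichain_partition:
  assumes f: "chain_retraction r X f" "f ` X \<subseteq> X"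
  shows "\<exists>\<P> C. partition_on X \<P> \<and> (\<forall>A\<in>\<P>. antichain_in X r A)
           \<and> chain_in X r C \<and> (\<forall>A\<in>\<P>. C \<inter> A \<noteq> {})"
proof -
  define C where "C = {c \<in> X. f c = c}"
  define fibre where "fibre c = {x \<in> X. f x = c}" for c
  have idem: "f (f x) = f x" if "x \<in> X" for x
    using f(1) that unfolding chain_retraction_def by blast
  have "partition_on X (fibre ` C)"
  proof (rule partition_onI)
    show "\<Union> (fibre ` C) = X"
      using f(2) idem unfolding C_def fibre_def by fastforce
    show "disjnt p q" if "p \<in> fibre ` C" "q \<in> fibre ` C" "p \<noteq> q" for p q
      using that unfolding disjnt_def fibre_def by auto
    show "{} \<notin> fibre ` C"
      unfolding C_def fibre_def by blast
  qed
  moreover have "antichain_in X r A" if "A \<in> fibre ` C" for A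
    using that f(1) unfolding antichain_in_def chain_retraction_def fibre_def by auto
  moreover have "chain_in X r C"
    using f(1) unfolding chain_in_def chain_retraction_def C_def by blast
  moreover have "C \<inter> A \<noteq> {}" if "A \<in> fibre ` C" for A
    using that unfolding C_def fibre_def by blast
  ultimately show ?thesis by blast
qed

theorem theorem4:
  fixes X :: "'a set" and r :: "'a rel"
  assumes "partial_order_on X r"
    and "incomp_graph_locally_finite X r"
  shows "\<exists>\<P> C. partition_on X \<P> \<and> (\<forall>A\<in>\<P>. antichain_in X r A)
           \<and> chain_in X r C \<and> (\<forall>A\<in>\<P>. C \<inter> A \<noteq> {})"
  using locally_finite_chain_retraction_exists[OF assms] chain_retraction_antichain_partition
  by blast

end
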